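(* Let $k$ be a field, $Q,q\in k^\times$, $d\ge1$ and $r\geq d$. Then for any $n\ge1$ and any $\mathbf a\in\mathbb I_n^d$, the $\mathcal H^B_{Q,q}(d)$-module $V(\mathbf a,n)$ is isomorphic to $V(\mathbf b,2r+1)$ for some $\mathbf b\in\mathbb I_{2r+1}^d$.
   Context: $\mathcal H^B_{Q,q}(d)$ is the algebra generated by $T_0,\dots,T_{d-1}$ with relations $(T_0+Q)(T_0-Q^{-1})=0$; $(T_i+q)(T_i-q^{-1})=0$ ($i>0$); $T_iT_{i+1}T_i=T_{i+1}T_iT_{i+1}$ ($i>0$); $T_0T_1T_0T_1=T_1T_0T_1T_0$; $T_iT_j=T_jT_i$ ($|i-j|>1$). For $n=2s$ let $\mathbb I_n=\{-\tfrac{2s-1}{2},\dots,-\tfrac12,\tfrac12,\dots,\tfrac{2s-1}{2}\}$ and for $n=2s+1$ let $\mathbb I_n=\{-s,\dots,s\}$; $V_n$ has basis $\{v_i:i\in\mathbb I_n\}$, and $v_{\mathbf a}=v_{a_1}\otimes\cdots\otimes v_{a_d}$. $R_q(v_i\otimes v_j)=q^{-1}v_i\otimes v_j$ if $i=j$, $v_j\otimes v_i$ if $i<j$, $v_j\otimes v_i+(q^{-1}-q)v_i\otimes v_j$ if $i>j$; $K_Q(v_i)=Q^{-1}v_i$ if $i=0$, $v_{-i}$ if $i>0$, $v_{-i}+(Q^{-1}-Q)v_i$ if $i<0$. The algebra acts on $V_n^{\otimes d}$ from the right: $T_i$ ($i>0$) by $R_q$ on factors $i,i+1$, $T_0$ by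 $K_Q$ on the first factor. The Weyl group $W^B(d)$ (Coxeter generators $s_0,\dots,s_{d-1}$) acts on $\mathbb I_n^d$ by $s_i$ ($i>0$) swapping the entries $a_i,a_{i+1}$ and $s_0$ replacing $a_1$ by $-a_1$. $V(\mathbf a,n)$ is the subspace of $V_n^{\otimes d}$ spanned by $\{v_{\sigma\mathbf a}:\sigma\in W^B(d)\}$; it is an $\mathcal H^B_{Q,q}(d)$-submodule. *)

theory Defs
  imports Main
begin

text \<open>Index set I_n encoded by doubling: an index i (integer or half-integer)
  is represented by the integer 2i. Thus I_n = {j. |j| <= n-1, j + n odd}.\<close>
definition idx :: "nat \<Rightarrow> int set" where
  "idx n = {j. \<bar>j\<bar> \<le> int n - 1 \<and> odd (j + int n)}"

definition words :: "nat \<Rightarrow> nat \<Rightarrow> int list set" where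
  "words n d = {a. length a = d \<and> set a \<subseteq> idx n}"

text \<open>Vectors of V_n^{\<otimes>d}: coordinate functions w.r.t. the basis v_a, a in I_n^d.\<close>
definition tensor_space :: "nat \<Rightarrow> nat \<Rightarrow> (int list \<Rightarrow> 'k::field) set" where
  "tensor_space n d = {f. \<forall>a. a \<notin> words n d \<longrightarrow> f a = 0}"

definition bvec :: "int list \<Rightarrow> int list \<Rightarrow> 'k::field" where
  "bvec a = (\<lambda>b. if b = a then 1 else 0)"

text \<open>Swap positions i and i+1 (1-indexed), i.e. list positions i-1 and i.\<close>
definition swp :: "nat \<Rightarrow> int list \<Rightarrow> int list" where
  "swp i a = a[i - 1 := a ! i, i := a ! (i - 1)]"

definition negfst :: "int list \<Rightarrow> int list" where
  "negfst a = a[0 := - (a ! 0)]"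

definition Tbasis :: "'k::field \<Rightarrow> 'k \<Rightarrow> nat \<Rightarrow> int list \<Rightarrow> int list \<Rightarrow> 'k" where
  "Tbasis Q q i a =
    (if i = 0 then
       (let x = a ! 0 in
        if x = 0 then (\<lambda>b. inverse Q * bvec a b)
        else if x > 0 then bvec (negfst a)
        else (\<lambda>b. bvec (negfst a) b + (inverse Q - Q) * bvec a b))
     else
       (let x = a ! (i - 1); y = a ! i in
        if x = y then (\<lambda>b. inverse q * bvec a b)
        else if x < y then bvec (swp i a)
        else (\<lambda>b. bvec (swp i a) b + (inverse q - q) * bvec a b)))"

text \<open>Right action of T_i on V_n^{\<otimes>d}, extended linearly.\<close>
definition Tact :: "'k::field \<Rightarrow> 'k \<Rightarrow> nat \<Rightarrow> nat \<Rightarrow> nat \<Rightarrow> (int list \<Rightarrow> 'k) \<Rightarrow> int list \<Rightarrow> 'k" where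
  "Tact Q q n d i f = (\<lambda>b. \<Sum>a\<in>words n d. f a * Tbasis Q q i a b)"

inductive_set WB_orbit :: "nat \<Rightarrow> int list \<Rightarrow> int list set" for d a where
  base: "a \<in> WB_orbit d a"
| s0: "b \<in> WB_orbit d a \<Longrightarrow> negfst b \<in> WB_orbit d a"
| si: "b \<in> WB_orbit d a \<Longrightarrow> 0 < i \<Longrightarrow> i < d \<Longrightarrow> swp i b \<in> WB_orbit d a"

text \<open>V(a,n) = span of {v_{\<sigma> a}}: the vectors supported on the orbit.\<close>
definition Vsub :: "nat \<Rightarrow> nat \<Rightarrow> int list \<Rightarrow> (int list \<Rightarrow> 'k::field) set" where
  "Vsub n d a = {f \<in> tensor_space n d. \<forall>b. b \<notin> WB_orbit d a \<longrightarrow> f b = 0}"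

definition HB_iso :: "'k::field \<Rightarrow> 'k \<Rightarrow> nat \<Rightarrow> nat \<Rightarrow> int list \<Rightarrow> nat \<Rightarrow> int list
                       \<Rightarrow> ((int list \<Rightarrow> 'k) \<Rightarrow> (int list \<Rightarrow> 'k)) \<Rightarrow> bool" where
  "HB_iso Q q d n a m b \<phi> \<longleftrightarrow>
     bij_betw \<phi> (Vsub n d a) (Vsub m d b) \<and>
     (\<forall>f\<in>Vsub n d a. \<forall>g\<in>Vsub n d a. \<phi> (\<lambda>x. f x + g x) = (\<lambda>x. \<phi> f x + \<phi> g x)) \<and>
     (\<forall>c. \<forall>f\<in>Vsub n d a. \<phi> (\<lambda>x. c * f x) = (\<lambda>x. c * \<phi> f x)) \<and>
     (\<forall>i<d. \<forall>f\<in>Vsub n d a. \<phi> (Tact Q q n d i f) = Tact Q q m d i (\<phi> f))"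

end

theory Submission
  imports Defs
begin

text \<open>The action of the generators on the basis vectors v_x only depends on which entries of x
  are zero or positive and on how adjacent entries compare. Hence relabelling all entries by an
  odd map g that is strictly increasing on a symmetric set containing the entries of a carries
  the orbit of a bijectively onto the orbit of map g a with the same matrix coefficients, and
  transporting coordinate functions along this bijection is an isomorphism V(a,n) = V(map g a, m).
  Choosing g to send x to sgn x times twice the rank of |x| among the positive absolute values of
  the entries of a, the at most d \<le> r ranks land in I_(2r+1).\<close>

lemma finite_idx: "finite (idx n)"
  by (rule finite_subset[of _ "{-int n..int n}"]) (auto simp: idx_def)

lemma finite_words: "finite (words n d)"
  using finite_lists_length_eq[OF finite_idx, of n d] by (simp add: words_def conj_commute)

lemma uminus_idx: "x \<in> idx n \<Longrightarrow> - x \<in> idx n"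
  unfolding idx_def by (auto simp: even_add)

lemma length_WB_orbit: "b \<in> WB_orbit d a \<Longrightarrow> length b = length a"
  by (induction rule: WB_orbit.induct) (auto simp: negfst_def swp_def)

lemma set_negfst_subset: "set b \<subseteq> V \<Longrightarrow> (\<And>x. x \<in> V \<Longrightarrow> - x \<in> V) \<Longrightarrow> set (negfst b) \<subseteq> V"
  unfolding negfst_def by (cases b) auto

lemma set_swp_subset: "set b \<subseteq> V \<Longrightarrow> i < length b \<Longrightarrow> set (swp i b) \<subseteq> V"
  unfolding swp_def by (auto dest!: set_update_subset_insert[THEN subsetD])

lemma set_WB_orbit_subset:
  assumes "b \<in> WB_orbit d a" "length a = d" "set a \<subseteq> V" "\<And>x. x \<in> V \<Longrightarrow> - x \<in> V"
  shows "set b \<subseteq> V"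
  using assms(1)
proof induction
  case (si b i)
  then show ?case using assms(2) set_swp_subset length_WB_orbit by metis
qed (use assms set_negfst_subset in auto)

lemma WB_orbit_subset_words: "a \<in> words n d \<Longrightarrow> WB_orbit d a \<subseteq> words n d"
  using set_WB_orbit_subset[of _ d a "idx n"] length_WB_orbit[of _ d a] uminus_idx
  by (fastforce simp: words_def)

lemma map_negfst: "(\<And>x. g (- x) = - g x) \<Longrightarrow> map g (negfst b) = negfst (map g b)"
  unfolding negfst_def by (cases b) auto

lemma map_swp: "i < length b \<Longrightarrow> map g (swp i b) = swp i (map g b)"
  unfolding swp_def by (simp add: map_update)

lemma map_WB_orbit:
  assumes odd: "\<And>x. g (- x) = - g x" and len: "length a = d"
  shows "map g ` WB_orbit d a = WB_orbit d (map g a)"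
proof (intro equalityI subsetI)
  fix c assume "c \<in> map g ` WB_orbit d a"
  then obtain x where x: "x \<in> WB_orbit d a" and c: "c = map g x" by auto
  from x have "map g x \<in> WB_orbit d (map g a)"
  proof induction
    case base
    show ?case by (rule WB_orbit.base)
  next
    case (s0 b)
    then show ?case using map_negfst[where g = g and b = b, OF odd] WB_orbit.s0 by metis
  next
    case (si b i)
    then show ?case using len map_swp[of i b g] length_WB_orbit WB_orbit.si by metis
  qed
  then show "c \<in> WB_orbit d (map g a)" using c by simp
next
  fix c assume "c \<in> WB_orbit d (map g a)"
  then show "c \<in> map g ` WB_orbit d a"
  proof induction
    case base
    then show ?case using WB_orbit.base by blast
  next
    case (s0 b)
    then obtain x where "x \<in> WB_orbit d a" "b = map g x" by blast
    then have "negfst b = map g (negfst x)" using map_negfst[where g = g and b = x, OF odd] by simp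
    then show ?case using WB_orbit.s0[OF \<open>x \<in> WB_orbit d a\<close>] by (rule image_eqI)
  next
    case (si b i)
    then obtain x where "x \<in> WB_orbit d a" "b = map g x" by blast
    then have "swp i b = map g (swp i x)" using si len map_swp[of i x g] length_WB_orbit by metis
    then show ?case using WB_orbit.si[OF \<open>x \<in> WB_orbit d a\<close> si(2,3)] by (rule image_eqI)
  qed
qed

lemma Tbasis_support:
  "Tbasis Q q i y c \<noteq> 0 \<Longrightarrow> c = y \<or> (i = 0 \<and> c = negfst y) \<or> (0 < i \<and> c = swp i y)"
  unfolding Tbasis_def bvec_def Let_def by (auto split: if_splits)

lemma Tbasis_eq_0_outside_WB_orbit:
  "y \<in> WB_orbit d b \<Longrightarrow> c \<notin> WB_orbit d b \<Longrightarrow> i < d \<Longrightarrow> Tbasis Q q i y c = 0"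
  using Tbasis_support[of Q q i y c] WB_orbit.s0 WB_orbit.si by blast

lemma sign_strict_mono_odd:
  fixes g :: "'a::linordered_ab_group_add \<Rightarrow> 'b::linordered_ab_group_add"
  assumes mono: "strict_mono_on V g" and odd: "\<And>x. g (- x) = - g x"
    and neg: "\<And>x. x \<in> V \<Longrightarrow> - x \<in> V" and x: "x \<in> V"
  shows "0 < g x \<longleftrightarrow> 0 < x" and "g x = 0 \<longleftrightarrow> x = 0"
proof -
  have "- g x < g x \<longleftrightarrow> - x < x"
    using strict_mono_on_less[OF mono neg[OF x] x] by (simp only: odd)
  then show "0 < g x \<longleftrightarrow> 0 < x" by (simp only: neg_less_pos)
  have "- g x = g x \<longleftrightarrow> - x = x"
    using strict_mono_on_eq[OF mono neg[OF x] x] by (simp only: odd)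
  then show "g x = 0 \<longleftrightarrow> x = 0" by (simp only: neg_equal_zero)
qed

lemma bvec_map:
  assumes "inj_on g V" "set y \<subseteq> V" "set z \<subseteq> V"
  shows "bvec (map g y) (map g z) = bvec y z"
  using assms inj_on_map_eq_map[of g z y] inj_on_subset[of g V "set z \<union> set y"]
  unfolding bvec_def by auto

lemma Tbasis_map:
  fixes g :: "int \<Rightarrow> int"
  assumes mono: "strict_mono_on V g" and odd: "\<And>x. g (- x) = - g x"
    and neg: "\<And>x. x \<in> V \<Longrightarrow> - x \<in> V"
    and x: "set x \<subseteq> V" and z: "set z \<subseteq> V" and i: "i < length x"
  shows "Tbasis Q q i (map g x) (map g z) = Tbasis Q q i x z"
proof -
  have inj: "inj_on g V" using mono by (rule strict_mono_on_imp_inj_on)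
  have fixed: "bvec (map g x) (map g z) = bvec x z" using bvec_map[OF inj x z] .
  show ?thesis
  proof (cases "i = 0")
    case True
    have x0: "x ! 0 \<in> V" and gx0: "map g x ! 0 = g (x ! 0)" using x i True by auto
    have moved: "bvec (negfst (map g x)) (map g z) = bvec (negfst x) z"
      using bvec_map[OF inj set_negfst_subset[OF x neg] z] map_negfst[where g = g, OF odd] by simp
    show ?thesis
      using True gx0 fixed moved sign_strict_mono_odd[OF mono odd neg x0]
      unfolding Tbasis_def Let_def by auto
  next
    case False
    have xi: "x ! (i - 1) \<in> V" "x ! i \<in> V" and gxi: "map g x ! (i - 1) = g (x ! (i - 1))" "map g x ! i = g (x ! i)"
      using x i by auto
    have moved: "bvec (swp i (map g x)) (map g z) = bvec (swp i x) z"
      using bvec_map[OF inj set_swp_subset[OF x i] z] map_swp[OF i] by simp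
    show ?thesis
      using False gxi fixed moved strict_mono_on_eq[OF mono xi] strict_mono_on_less[OF mono xi]
      unfolding Tbasis_def Let_def by auto
  qed
qed

definition pushforward :: "('a \<Rightarrow> 'b) \<Rightarrow> 'a set \<Rightarrow> ('a \<Rightarrow> 'k::zero) \<Rightarrow> 'b \<Rightarrow> 'k" where
  "pushforward \<beta> A f = (\<lambda>c. if c \<in> \<beta> ` A then f (inv_into A \<beta> c) else 0)"

lemma pushforward_apply: "inj_on \<beta> A \<Longrightarrow> x \<in> A \<Longrightarrow> pushforward \<beta> A f (\<beta> x) = f x"
  unfolding pushforward_def by simp

lemma bij_betw_pushforward:
  fixes \<beta> :: "'a \<Rightarrow> 'b" and A :: "'a set"
  assumes inj: "inj_on \<beta> A"
  shows "bij_betw (pushforward \<beta> A :: ('a \<Rightarrow> 'k::zero) \<Rightarrow> _)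
           {f. \<forall>x. x \<notin> A \<longrightarrow> f x = 0} {f. \<forall>y. y \<notin> \<beta> ` A \<longrightarrow> f y = 0}"
proof (rule bij_betwI')
  fix f f' :: "'a \<Rightarrow> 'k"
  assume f: "f \<in> {f. \<forall>x. x \<notin> A \<longrightarrow> f x = 0}" and f': "f' \<in> {f. \<forall>x. x \<notin> A \<longrightarrow> f x = 0}"
  show "pushforward \<beta> A f = pushforward \<beta> A f' \<longleftrightarrow> f = f'"
  proof
    assume eq: "pushforward \<beta> A f = pushforward \<beta> A f'"
    show "f = f'"
    proof
      fix x
      show "f x = f' x"
        using f f' pushforward_apply[OF inj, of x f] pushforward_apply[OF inj, of x f'] eq
        by (cases "x \<in> A") auto
    qed
  qed simp
next
  fix f :: "'a \<Rightarrow> 'k"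
  show "f \<in> {f. \<forall>x. x \<notin> A \<longrightarrow> f x = 0} \<Longrightarrow> pushforward \<beta> A f \<in> {f. \<forall>y. y \<notin> \<beta> ` A \<longrightarrow> f y = 0}"
    by (simp add: pushforward_def)
next
  fix F :: "'b \<Rightarrow> 'k" assume F: "F \<in> {f. \<forall>y. y \<notin> \<beta> ` A \<longrightarrow> f y = 0}"
  define f where "f = (\<lambda>x. if x \<in> A then F (\<beta> x) else 0)"
  have "F = pushforward \<beta> A f"
  proof
    fix c
    show "F c = pushforward \<beta> A f c"
      using F unfolding pushforward_def f_def by (auto simp: f_inv_into_f inv_into_into)
  qed
  moreover have "f \<in> {f. \<forall>x. x \<notin> A \<longrightarrow> f x = 0}" by (simp add: f_def)
  ultimately show "\<exists>f \<in> {f. \<forall>x. x \<notin> A \<longrightarrow> f x = 0}. F = pushforward \<beta> A f" by blast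
qed

lemma sum_pushforward:
  "inj_on \<beta> A \<Longrightarrow> (\<Sum>y\<in>\<beta> ` A. pushforward \<beta> A f y * h y) = (\<Sum>x\<in>A. f x * h (\<beta> x))"
  by (simp add: sum.reindex pushforward_apply)

lemma Vsub_eq: "a \<in> words n d \<Longrightarrow> Vsub n d a = {f. \<forall>x. x \<notin> WB_orbit d a \<longrightarrow> f x = 0}"
  using WB_orbit_subset_words unfolding Vsub_def tensor_space_def by blast

lemma Tact_eq_sum_WB_orbit:
  assumes "a \<in> words n d" "f \<in> Vsub n d a"
  shows "Tact Q q n d i f c = (\<Sum>x\<in>WB_orbit d a. f x * Tbasis Q q i x c)"
  unfolding Tact_def using assms WB_orbit_subset_words[OF assms(1)] finite_words
  by (intro sum.mono_neutral_right) (auto simp: Vsub_eq)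

lemma pushforward_Tact:
  fixes Q q :: "'k::field" and f :: "int list \<Rightarrow> 'k"
  assumes a: "a \<in> words n d" and b: "b \<in> words m d"
    and inj: "inj_on \<beta> (WB_orbit d a)" and img: "\<beta> ` WB_orbit d a = WB_orbit d b"
    and coeff: "\<And>x z. x \<in> WB_orbit d a \<Longrightarrow> z \<in> WB_orbit d a \<Longrightarrow> Tbasis Q q i (\<beta> x) (\<beta> z) = Tbasis Q q i x z"
    and i: "i < d" and f: "f \<in> Vsub n d a"
  shows "pushforward \<beta> (WB_orbit d a) (Tact Q q n d i f) = Tact Q q m d i (pushforward \<beta> (WB_orbit d a) f)"
proof
  fix c
  let ?A = "WB_orbit d a" and ?f' = "pushforward \<beta> (WB_orbit d a) f"
  have "?f' \<in> Vsub m d b"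
    using bij_betw_pushforward[OF inj] f unfolding Vsub_eq[OF a] Vsub_eq[OF b] img bij_betw_def by blast
  then have "Tact Q q m d i ?f' c = (\<Sum>y\<in>WB_orbit d b. ?f' y * Tbasis Q q i y c)"
    by (rule Tact_eq_sum_WB_orbit[OF b])
  also have "\<dots> = (\<Sum>x\<in>?A. f x * Tbasis Q q i (\<beta> x) c)"
    unfolding img[symmetric] by (rule sum_pushforward[OF inj])
  finally have image_side: "Tact Q q m d i ?f' c = (\<Sum>x\<in>?A. f x * Tbasis Q q i (\<beta> x) c)" .
  show "pushforward \<beta> ?A (Tact Q q n d i f) c = Tact Q q m d i ?f' c"
  proof (cases "c \<in> \<beta> ` ?A")
    case True
    then obtain z where z: "z \<in> ?A" "c = \<beta> z" by blast
    have "pushforward \<beta> ?A (Tact Q q n d i f) c = Tact Q q n d i f z"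
      using pushforward_apply[OF inj z(1)] z(2) by simp
    also have "\<dots> = (\<Sum>x\<in>?A. f x * Tbasis Q q i x z)"
      by (rule Tact_eq_sum_WB_orbit[OF a f])
    also have "\<dots> = Tact Q q m d i ?f' c"
      using image_side coeff[OF _ z(1)] z(2) by simp
    finally show ?thesis .
  next
    case False
    have "\<And>x. x \<in> ?A \<Longrightarrow> Tbasis Q q i (\<beta> x) c = 0"
      using Tbasis_eq_0_outside_WB_orbit[OF _ _ i] False img by blast
    then show ?thesis using False image_side by (simp add: pushforward_def)
  qed
qed

lemma HB_iso_pushforward:
  fixes Q q :: "'k::field"
  assumes a: "a \<in> words n d" and b: "b \<in> words m d"
    and inj: "inj_on \<beta> (WB_orbit d a)" and img: "\<beta> ` WB_orbit d a = WB_orbit d b"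
    and coeff: "\<And>i x z. i < d \<Longrightarrow> x \<in> WB_orbit d a \<Longrightarrow> z \<in> WB_orbit d a \<Longrightarrow>
                  Tbasis Q q i (\<beta> x) (\<beta> z) = Tbasis Q q i x z"
  shows "HB_iso Q q d n a m b (pushforward \<beta> (WB_orbit d a))"
  unfolding HB_iso_def
proof (intro conjI ballI allI impI)
  show "bij_betw (pushforward \<beta> (WB_orbit d a)) (Vsub n d a) (Vsub m d b)"
    using bij_betw_pushforward[OF inj] unfolding Vsub_eq[OF a] Vsub_eq[OF b] img .
next
  fix i and f :: "int list \<Rightarrow> 'k" assume "i < d" "f \<in> Vsub n d a"
  then show "pushforward \<beta> (WB_orbit d a) (Tact Q q n d i f) = Tact Q q m d i (pushforward \<beta> (WB_orbit d a) f)"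
    using pushforward_Tact[OF a b inj img coeff] by blast
qed (auto simp: pushforward_def)

definition pos_rank :: "int set \<Rightarrow> int \<Rightarrow> nat" where
  "pos_rank P t = card {y \<in> P. 0 < y \<and> y \<le> t}"

text \<open>Indices are doubled in this encoding, so I_(2r+1) consists of the even integers in [-2r, 2r].\<close>

definition compress :: "int set \<Rightarrow> int \<Rightarrow> int" where
  "compress P x = sgn x * (2 * int (pos_rank P \<bar>x\<bar>))"

lemma pos_rank_le_card: "finite P \<Longrightarrow> pos_rank P t \<le> card P"
  unfolding pos_rank_def by (intro card_mono) auto

lemma pos_rank_strict_mono:
  assumes "finite P" "s < t" "t \<in> P" "0 < t"
  shows "pos_rank P s < pos_rank P t"
  unfolding pos_rank_def
proof (rule psubset_card_mono)
  show "finite {y \<in> P. 0 < y \<and> y \<le> t}" using assms(1) by simp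
  have "t \<notin> {y \<in> P. 0 < y \<and> y \<le> s}" using assms(2) by simp
  moreover have "t \<in> {y \<in> P. 0 < y \<and> y \<le> t}" using assms(3,4) by simp
  moreover have "{y \<in> P. 0 < y \<and> y \<le> s} \<subseteq> {y \<in> P. 0 < y \<and> y \<le> t}" using assms(2) by auto
  ultimately show "{y \<in> P. 0 < y \<and> y \<le> s} \<subset> {y \<in> P. 0 < y \<and> y \<le> t}" by blast
qed

lemma compress_uminus: "compress P (- x) = - compress P x"
  unfolding compress_def by (simp add: sgn_minus)

lemma compress_less_nonneg:
  assumes "finite P" "0 \<le> x" "x < y" "y \<in> P"
  shows "compress P x < compress P y"
proof -
  have "0 < y" using assms(2,3) by simp
  then have "pos_rank P x < pos_rank P y" using pos_rank_strict_mono[OF assms(1,3,4)] by simp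
  then show ?thesis using assms(2) \<open>0 < y\<close> unfolding compress_def by (cases "x = 0") (simp_all add: sgn_if)
qed

lemma strict_mono_on_compress:
  assumes "finite P"
  shows "strict_mono_on {x. \<bar>x\<bar> \<in> P} (compress P)"
proof (rule strict_mono_onI)
  fix x y assume x: "x \<in> {x. \<bar>x\<bar> \<in> P}" and y: "y \<in> {x. \<bar>x\<bar> \<in> P}" and "x < y"
  consider "0 \<le> x" | "x < 0" "0 \<le> y" | "y < 0" by linarith
  then show "compress P x < compress P y"
  proof cases
    case 1
    have "y \<in> P" using y 1 \<open>x < y\<close> by simp
    then show ?thesis by (rule compress_less_nonneg[OF assms 1 \<open>x < y\<close>])
  next
    case 2
    have "- x \<in> P" using x 2 by simp
    then have "compress P 0 < compress P (- x)"
      using 2 by (intro compress_less_nonneg[OF assms]) simp_all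
    moreover have "0 \<le> compress P y" using 2 by (simp add: compress_def sgn_if)
    ultimately show ?thesis unfolding compress_uminus by (simp add: compress_def)
  next
    case 3
    have "- x \<in> P" using x 3 \<open>x < y\<close> by simp
    then have "compress P (- y) < compress P (- x)"
      using 3 \<open>x < y\<close> by (intro compress_less_nonneg[OF assms]) simp_all
    then show ?thesis unfolding compress_uminus by simp
  qed
qed

lemma compress_in_idx:
  assumes "finite P" "card P \<le> r"
  shows "compress P x \<in> idx (2 * r + 1)"
proof -
  have "pos_rank P \<bar>x\<bar> \<le> r" using pos_rank_le_card[OF assms(1)] assms(2) by (rule le_trans)
  then have "\<bar>compress P x\<bar> \<le> 2 * int r"
    unfolding compress_def by (simp add: abs_mult abs_sgn_eq)
  moreover have "even (compress P x)" by (simp add: compress_def)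
  ultimately show ?thesis by (simp add: idx_def)
qed

lemma HB_iso_map:
  fixes Q q :: "'k::field" and g :: "int \<Rightarrow> int"
  assumes mono: "strict_mono_on V g" and odd: "\<And>x. g (- x) = - g x"
    and neg: "\<And>x. x \<in> V \<Longrightarrow> - x \<in> V"
    and a: "a \<in> words n d" "set a \<subseteq> V" and b: "map g a \<in> words m d"
  shows "HB_iso Q q d n a m (map g a) (pushforward (map g) (WB_orbit d a))"
proof -
  have len: "length a = d" using a(1) by (simp add: words_def)
  have orbit_V: "set x \<subseteq> V" and orbit_len: "length x = d" if "x \<in> WB_orbit d a" for x
    using set_WB_orbit_subset[OF that len a(2) neg] length_WB_orbit[OF that] len by simp_all
  have "inj_on (map g) (WB_orbit d a)"
    using strict_mono_on_imp_inj_on[OF mono] orbit_V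
    by (intro inj_on_mapI) (auto intro: inj_on_subset)
  moreover have "map g ` WB_orbit d a = WB_orbit d (map g a)" by (rule map_WB_orbit[where g = g, OF odd len])
  moreover have "Tbasis Q q i (map g x) (map g z) = Tbasis Q q i x z"
    if "i < d" "x \<in> WB_orbit d a" "z \<in> WB_orbit d a" for i x z
    using Tbasis_map[OF mono odd neg orbit_V[OF that(2)] orbit_V[OF that(3)]] orbit_len[OF that(2)] that(1)
    by simp
  ultimately show ?thesis by (rule HB_iso_pushforward[OF a(1) b])
qed

theorem lemma2p15:
  fixes Q q :: "'k::field" and d r :: nat
  assumes "Q \<noteq> 0" and "q \<noteq> 0" and "d \<ge> 1" and "r \<ge> d"
  shows "\<forall>n \<ge> 1. \<forall>a \<in> words n d. \<exists>b \<in> words (2 * r + 1) d.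
           \<exists>\<phi>. HB_iso Q q d n a (2 * r + 1) b \<phi>"
proof (intro allI impI ballI)
  fix n a assume a: "a \<in> words n d"
  define P where "P = abs ` set a"
  have fin: "finite P" by (simp add: P_def)
  have "card P \<le> d"
    using card_image_le[of "set a" abs] card_length[of a] a by (simp add: P_def words_def)
  then have "map (compress P) a \<in> words (2 * r + 1) d"
    using a compress_in_idx[OF fin] \<open>r \<ge> d\<close> by (auto simp: words_def)
  moreover have "HB_iso Q q d n a (2 * r + 1) (map (compress P) a) (pushforward (map (compress P)) (WB_orbit d a))"
    using strict_mono_on_compress[OF fin] compress_uminus a calculation
    by (intro HB_iso_map) (auto simp: P_def)
  ultimately show "\<exists>b \<in> words (2 * r + 1) d. \<exists>\<phi>. HB_iso Q q d n a (2 * r + 1) b \<phi>" by blast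
qed

end
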